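(* Consider any instance with $n$ agents with monotone valuations and $m=n+2$ goods. For each agent $i\in N$ there exists an EFX allocation $\mathcal{A}=(A_1,\dots,A_n)$ in which every agent receives at least one good and either (1) $|A_i|=3$; or (2) there is an agent $j\neq i$ with $|A_i|=|A_j|=2$ such that for some $k\in\{i,j\}$, agent $k$ receives a good $g\in A_k$ with $v_k(\{g\})\ge v_k(\{g'\})$ for all $g'\in A_i\cup A_j$. *)

theory Defs
  imports Complex_Main
begin

definition monotone_valuation :: "'g set \<Rightarrow> ('g set \<Rightarrow> real) \<Rightarrow> bool" where
  "monotone_valuation M v \<longleftrightarrow> (\<forall>S T. S \<subseteq> T \<longrightarrow> T \<subseteq> M \<longrightarrow> v S \<le> v T)"

definition is_allocation :: "'a set \<Rightarrow> 'g set \<Rightarrow> ('a \<Rightarrow> 'g set) \<Rightarrow> bool" where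
  "is_allocation N M A \<longleftrightarrow>
     (\<forall>i\<in>N. A i \<subseteq> M) \<and>
     (\<forall>i\<in>N. \<forall>j\<in>N. i \<noteq> j \<longrightarrow> A i \<inter> A j = {}) \<and>
     (\<Union>i\<in>N. A i) = M"

definition EFX :: "'a set \<Rightarrow> ('a \<Rightarrow> 'g set \<Rightarrow> real) \<Rightarrow> ('a \<Rightarrow> 'g set) \<Rightarrow> bool" where
  "EFX N v A \<longleftrightarrow>
     (\<forall>i\<in>N. \<forall>j\<in>N. \<forall>g\<in>A j. v i (A i) \<ge> v i (A j - {g}))"

end

theory Submission
  imports Defs "HOL-Library.FuncSet"
begin

text \<open>With a single agent, that agent gets all three goods. Otherwise refine agent i's
  ranking of single goods to a strict rank. A configuration gives one good to every agent
  except i and one further agent c, such that nobody prefers a good of the remaining pool to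
  their own; i's best pool good r splits the pool of four goods into r and a rest S of three.
  Take a configuration minimising first the rank sum of S and then the number of agents who
  envy S up to one good. If c's favourite pool good is not r, or c values some two goods of S
  at least as much as r, the pool splits into two pairs for i and c that work. Otherwise
  c takes r and i takes S, and this is EFX: if some agent b envied S, then c could take r,
  b could become the agent without a good, and after re-optimising the others' goods outside S
  either the rank sum of the new rest drops or it is S again with fewer envious agents.\<close>

lemma monotone_valuationD:
  assumes "monotone_valuation M f" "S \<subseteq> T" "T \<subseteq> M"
  shows "f S \<le> f T"
  using assms unfolding monotone_valuation_def by blast

lemma is_allocation_singletons:
  assumes "inj_on x N"
  shows "is_allocation N (x ` N) (\<lambda>a. {x a})"
  using assms unfolding is_allocation_def inj_on_def by auto

lemma is_allocation_fun_upd: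
  assumes "is_allocation N M A" "j \<notin> N" "B \<inter> M = {}"
  shows "is_allocation (insert j N) (M \<union> B) (A(j := B))"
proof -
  have "A k \<subseteq> M" if "k \<in> N" for k
    using assms(1) that unfolding is_allocation_def by blast
  then show ?thesis
    using assms unfolding is_allocation_def by (auto simp: Int_commute)
qed

lemma EFXI:
  assumes "\<forall>k\<in>N. monotone_valuation M (v k)" "\<forall>k\<in>N. A k \<subseteq> M"
    and "\<And>k l g. k \<in> N \<Longrightarrow> l \<in> N \<Longrightarrow> k \<noteq> l \<Longrightarrow> g \<in> A l \<Longrightarrow> A l - {g} \<noteq> {} \<Longrightarrow>
           v k (A l - {g}) \<le> v k (A k)"
  shows "EFX N v A"
  unfolding EFX_def
proof (intro ballI)
  fix k l g assume k: "k \<in> N" and l: "l \<in> N" and g: "g \<in> A l"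
  have mono: "v k S \<le> v k (A k)" if "S \<subseteq> A k" for S
    using monotone_valuationD[of M "v k" S "A k"] assms(1,2) k that by blast
  show "v k (A l - {g}) \<le> v k (A k)"
  proof (cases "k = l \<or> A l - {g} = {}")
    case True
    then show ?thesis using mono[of "A l - {g}"] mono[of "{}"] by auto
  next
    case False
    then show ?thesis using assms(3) k l g by blast
  qed
qed

lemma exists_rank_refining:
  fixes f :: "'g \<Rightarrow> 'b::linorder"
  assumes "finite M"
  shows "\<exists>\<rho>::'g \<Rightarrow> nat. inj_on \<rho> M \<and> (\<forall>g\<in>M. \<forall>h\<in>M. f g < f h \<longrightarrow> \<rho> g < \<rho> h)"
proof -
  obtain e where e: "e ` M \<subseteq> {..<card M}" "inj_on e M"
    using card_le_inj[of M "{..<card M}"] assms by auto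
  define below where "below g = card {h\<in>M. f h < f g}" for g
  define \<rho> where "\<rho> g = below g * card M + e g" for g
  have "inj_on \<rho> M"
  proof (rule inj_onI)
    fix g h assume g: "g \<in> M" and h: "h \<in> M" and eq: "\<rho> g = \<rho> h"
    have "\<rho> g mod card M = e g" "\<rho> h mod card M = e h"
      using e g h unfolding \<rho>_def by auto
    then show "g = h" using eq e(2) g h by (metis inj_onD)
  qed
  moreover have "\<rho> g < \<rho> h" if g: "g \<in> M" and h: "h \<in> M" and lt: "f g < f h" for g h
  proof -
    have "{h'\<in>M. f h' < f g} \<subset> {h'\<in>M. f h' < f h}" using lt g by auto
    then have "below g < below h" unfolding below_def using assms by (intro psubset_card_mono) auto
    then have "Suc (below g) * card M \<le> below h * card M" by (intro mult_le_mono1) simp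
    moreover have "e g < card M" using e g by auto
    ultimately show ?thesis unfolding \<rho>_def by simp
  qed
  ultimately show ?thesis by blast
qed

lemma arg_max_on_finite:
  fixes f :: "'b \<Rightarrow> 'a::linorder"
  assumes "finite S" "S \<noteq> {}"
  shows "arg_max_on f S \<in> S" "\<And>y. y \<in> S \<Longrightarrow> f y \<le> f (arg_max_on f S)"
proof -
  have "Max (f ` S) \<in> f ` S" using assms by simp
  then obtain x where x: "x \<in> S" "f x = Max (f ` S)" by auto
  have "arg_max_on f S \<in> S \<and> (\<forall>y\<in>S. f y \<le> f (arg_max_on f S))"
    unfolding arg_max_on_def
  proof (rule arg_maxI)
    show "x \<in> S" by (fact x(1))
    show "\<not> f x < f y" if "y \<in> S" for y
      using assms that x(2) by (metis Max_ge finite_imageI imageI not_less)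
  qed (auto simp: not_less)
  then show "arg_max_on f S \<in> S" "\<And>y. y \<in> S \<Longrightarrow> f y \<le> f (arg_max_on f S)" by auto
qed

lemma exists_locally_optimal_injection:
  fixes u :: "'a \<Rightarrow> 'g \<Rightarrow> real"
  assumes "finite A" "finite G" "inj_on y A" "y ` A \<subseteq> G"
  shows "\<exists>x. inj_on x A \<and> x ` A \<subseteq> G \<and> (\<forall>a\<in>A. u a (y a) \<le> u a (x a)) \<and>
             (\<forall>a\<in>A. \<forall>g\<in>G - x ` A. u a g \<le> u a (x a))"
proof -
  define X where "X = {x \<in> A \<rightarrow>\<^sub>E G. inj_on x A \<and> (\<forall>a\<in>A. u a (y a) \<le> u a (x a))}"
  define welfare where "welfare x = (\<Sum>a\<in>A. u a (x a))" for x
  have "finite X" unfolding X_def using finite_PiE[of A "\<lambda>_. G"] assms(1,2) by auto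
  moreover have "restrict y A \<in> X" unfolding X_def using assms(3,4) by (auto simp: inj_on_def)
  ultimately obtain x where "x \<in> X" and x_max: "\<And>x'. x' \<in> X \<Longrightarrow> welfare x' \<le> welfare x"
    using arg_max_on_finite[where f = welfare and S = X] by blast
  then have x: "x \<in> A \<rightarrow>\<^sub>E G" "inj_on x A" "\<forall>a\<in>A. u a (y a) \<le> u a (x a)"
    unfolding X_def by auto
  have "u a g \<le> u a (x a)" if a: "a \<in> A" and g: "g \<in> G - x ` A" for a g
  proof (rule ccontr)
    assume "\<not> u a g \<le> u a (x a)"
    then have lt: "u a (x a) < u a g" by simp
    have "x(a := g) \<in> X"
      unfolding X_def using x a g lt by (auto simp: PiE_def extensional_def intro!: inj_on_fun_updI)
    moreover have "welfare x < welfare (x(a := g))"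
      unfolding welfare_def using a assms(1) lt by (simp add: sum.remove)
    ultimately show False using x_max by fastforce
  qed
  then show ?thesis using x by blast
qed

lemma insert_Diff_arg_max_on:
  fixes \<rho> :: "'g \<Rightarrow> nat" and z :: 'g and S :: "'g set"
  defines "t \<equiv> arg_max_on \<rho> (insert z S)"
  assumes "finite S" "z \<notin> S" "inj_on \<rho> (insert z S)"
  shows "insert z S - {t} = S \<or> (\<Sum>g\<in>insert z S - {t}. \<rho> g) < (\<Sum>g\<in>S. \<rho> g)"
proof (cases "t = z")
  case True
  then show ?thesis using assms(3) by auto
next
  case False
  have t: "t \<in> insert z S" "\<rho> z \<le> \<rho> t"
    using arg_max_on_finite[where f = \<rho> and S = "insert z S"] assms(2) unfolding t_def by auto
  then have "t \<in> S" "\<rho> z < \<rho> t"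
    using False inj_onD[OF assms(4), of z t] by (auto simp: le_less)
  moreover have "insert z S - {t} = insert z (S - {t})" using False by auto
  ultimately show ?thesis using assms(2,3) by (simp add: sum.remove)
qed

definition favourable_EFX_allocation ::
    "'a set \<Rightarrow> 'g set \<Rightarrow> ('a \<Rightarrow> 'g set \<Rightarrow> real) \<Rightarrow> 'a \<Rightarrow> ('a \<Rightarrow> 'g set) \<Rightarrow> bool" where
  "favourable_EFX_allocation N M v i A \<longleftrightarrow>
     is_allocation N M A \<and> EFX N v A \<and> (\<forall>k\<in>N. A k \<noteq> {}) \<and>
     (card (A i) = 3 \<or>
      (\<exists>j\<in>N. j \<noteq> i \<and> card (A i) = 2 \<and> card (A j) = 2 \<and>
         (\<exists>k\<in>{i, j}. \<exists>g\<in>A k. \<forall>g'\<in>A i \<union> A j. v k {g} \<ge> v k {g'})))"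

lemma favourable_EFX_allocation_triple:
  assumes mono: "\<forall>k\<in>N. monotone_valuation M (v k)" and i: "i \<in> N"
    and inj: "inj_on x (N - {i})" and x_M: "x ` (N - {i}) \<subseteq> M"
    and T: "T = M - x ` (N - {i})" "card T = 3"
    and no_envy: "\<forall>a\<in>N - {i}. \<forall>g\<in>T. v a (T - {g}) \<le> v a {x a}"
  shows "favourable_EFX_allocation N M v i ((\<lambda>a. {x a})(i := T))"
proof -
  let ?A = "(\<lambda>a. {x a})(i := T)"
  have "is_allocation (insert i (N - {i})) (x ` (N - {i}) \<union> T) ?A"
    using T(1) by (intro is_allocation_fun_upd is_allocation_singletons inj) auto
  moreover have "insert i (N - {i}) = N" "x ` (N - {i}) \<union> T = M" using i x_M T(1) by auto
  ultimately have alloc: "is_allocation N M ?A" by simp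
  have "EFX N v ?A"
  proof (rule EFXI[OF mono])
    show "\<forall>k\<in>N. ?A k \<subseteq> M" using x_M T(1) by auto
    fix k l g assume "k \<in> N" "l \<in> N" "k \<noteq> l" "g \<in> ?A l" "?A l - {g} \<noteq> {}"
    then show "v k (?A l - {g}) \<le> v k (?A k)"
      using no_envy by (cases "l = i") auto
  qed
  moreover have "\<forall>k\<in>N. ?A k \<noteq> {}" using T(2) by auto
  ultimately show ?thesis using alloc T(2) unfolding favourable_EFX_allocation_def by simp
qed

lemma favourable_EFX_allocation_pairs:
  assumes mono: "\<forall>k\<in>N. monotone_valuation M (v k)"
    and ij: "i \<in> N" "j \<in> N" "i \<noteq> j"
    and inj: "inj_on x (N - {i, j})" and x_M: "x ` (N - {i, j}) \<subseteq> M"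
    and Q: "Qi \<union> Qj = M - x ` (N - {i, j})" "Qi \<inter> Qj = {}" "card Qi = 2" "card Qj = 2"
    and others: "\<forall>a\<in>N - {i, j}. \<forall>g\<in>Qi \<union> Qj. v a {g} \<le> v a {x a}"
    and envy_free_i: "\<forall>g\<in>Qj. v i {g} \<le> v i Qi" and envy_free_j: "\<forall>g\<in>Qi. v j {g} \<le> v j Qj"
    and favourite: "(\<exists>g\<in>Qi. \<forall>g'\<in>Qi \<union> Qj. v i {g'} \<le> v i {g}) \<or>
                    (\<exists>g\<in>Qj. \<forall>g'\<in>Qi \<union> Qj. v j {g'} \<le> v j {g})"
  shows "favourable_EFX_allocation N M v i (((\<lambda>a. {x a})(j := Qj))(i := Qi))"
proof -
  let ?A = "((\<lambda>a. {x a})(j := Qj))(i := Qi)"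
  have A: "?A i = Qi" "?A j = Qj" "\<And>a. a \<notin> {i, j} \<Longrightarrow> ?A a = {x a}" using ij(3) by auto
  have "is_allocation (insert i (insert j (N - {i, j}))) ((x ` (N - {i, j}) \<union> Qj) \<union> Qi) ?A"
    using Q(1,2) ij(3)
    by (intro is_allocation_fun_upd is_allocation_singletons inj) auto
  moreover have "insert i (insert j (N - {i, j})) = N" "(x ` (N - {i, j}) \<union> Qj) \<union> Qi = M"
    using ij x_M Q(1) by auto
  ultimately have alloc: "is_allocation N M ?A" by simp
  have "EFX N v ?A"
  proof (rule EFXI[OF mono])
    show "\<forall>k\<in>N. ?A k \<subseteq> M" using x_M Q(1) by auto
    fix k l g assume kl: "k \<in> N" "l \<in> N" "k \<noteq> l" and g: "g \<in> ?A l" and "?A l - {g} \<noteq> {}"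
    then have l: "l \<in> {i, j}" using A(3) by fastforce
    then have "card (?A l - {g}) = 1" using A(1,2) Q(3,4) g by auto
    then obtain g' where g': "?A l - {g} = {g'}" by (rule card_1_singletonE)
    then have "g' \<in> ?A l" "g' \<in> Qi \<union> Qj" using l A(1,2) by auto
    then have "v k {g'} \<le> v k (?A k)"
      using kl l g' A envy_free_i envy_free_j others by (cases "k \<in> {i, j}") auto
    then show "v k (?A l - {g}) \<le> v k (?A k)" using g' by simp
  qed
  moreover have "\<forall>k\<in>N. ?A k \<noteq> {}" using Q(3,4) by auto
  moreover have pair: "\<exists>k\<in>{i, j}. \<exists>g\<in>?A k. \<forall>g'\<in>?A i \<union> ?A j. v k {g} \<ge> v k {g'}"
    using favourite
  proof
    assume "\<exists>g\<in>Qi. \<forall>g'\<in>Qi \<union> Qj. v i {g'} \<le> v i {g}"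
    then show ?thesis using ij(3) unfolding A(1,2) by (intro bexI[of _ i]) auto
  next
    assume "\<exists>g\<in>Qj. \<forall>g'\<in>Qi \<union> Qj. v j {g'} \<le> v j {g}"
    then show ?thesis using ij(3) unfolding A(1,2) by (intro bexI[of _ j]) auto
  qed
  moreover have "\<exists>j'\<in>N. j' \<noteq> i \<and> card (?A i) = 2 \<and> card (?A j') = 2 \<and>
      (\<exists>k\<in>{i, j'}. \<exists>g\<in>?A k. \<forall>g'\<in>?A i \<union> ?A j'. v k {g} \<ge> v k {g'})"
    using pair ij Q(3,4) A(1,2) by (intro bexI[of _ j]) simp_all
  ultimately show ?thesis using alloc unfolding favourable_EFX_allocation_def by blast
qed

locale ranked_instance =
  fixes N :: "'a set" and M :: "'g set" and v :: "'a \<Rightarrow> 'g set \<Rightarrow> real"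
    and i :: 'a and \<rho> :: "'g \<Rightarrow> nat"
  assumes finite_N: "finite N" and finite_M: "finite M" and card_M: "card M = card N + 2"
    and monotone: "\<forall>k\<in>N. monotone_valuation M (v k)"
    and i_in_N: "i \<in> N" and two_agents: "2 \<le> card N"
    and inj_rank: "inj_on \<rho> M"
    and rank_refines: "\<And>g h. g \<in> M \<Longrightarrow> h \<in> M \<Longrightarrow> v i {g} < v i {h} \<Longrightarrow> \<rho> g < \<rho> h"
begin

definition config :: "'a \<Rightarrow> ('a \<Rightarrow> 'g) \<Rightarrow> bool" where
  "config c x \<longleftrightarrow> c \<in> N - {i} \<and> inj_on x (N - {i, c}) \<and> x ` (N - {i, c}) \<subseteq> M \<and>
     (\<forall>a\<in>N - {i, c}. \<forall>g\<in>M - x ` (N - {i, c}). v a {g} \<le> v a {x a})"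

definition pool :: "'a \<Rightarrow> ('a \<Rightarrow> 'g) \<Rightarrow> 'g set" where
  "pool c x = M - x ` (N - {i, c})"

abbreviation best :: "'g set \<Rightarrow> 'g" where
  "best P \<equiv> arg_max_on \<rho> P"

definition rest :: "'a \<Rightarrow> ('a \<Rightarrow> 'g) \<Rightarrow> 'g set" where
  "rest c x = pool c x - {best (pool c x)}"

definition envious :: "'a \<Rightarrow> ('a \<Rightarrow> 'g) \<Rightarrow> 'a set" where
  "envious c x = {a \<in> N - {i, c}. \<exists>g\<in>rest c x. v a {x a} < v a (rest c x - {g})}"

text \<open>Since \<^term>\<open>card (envious c x) < card N\<close>, potentials compare lexicographically:
  first by the rank sum of the rest, then by the number of envious agents.\<close>

definition potential :: "'a \<Rightarrow> ('a \<Rightarrow> 'g) \<Rightarrow> nat" where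
  "potential c x = (\<Sum>g\<in>rest c x. \<rho> g) * card N + card (envious c x)"

lemma card_pool:
  assumes "config c x"
  shows "card (pool c x) = 4"
proof -
  have c: "c \<in> N - {i}" and inj: "inj_on x (N - {i, c})" and x_M: "x ` (N - {i, c}) \<subseteq> M"
    using assms unfolding config_def by auto
  have "card (N - {i, c}) = card N - 2" using c i_in_N finite_N by (auto simp: card_Diff_subset)
  then have "card (x ` (N - {i, c})) = card N - 2" using card_image[OF inj] by simp
  then show ?thesis
    unfolding pool_def using card_Diff_subset[OF finite_subset[OF x_M finite_M] x_M] card_M two_agents
    by simp
qed

lemma finite_pool: "finite (pool c x)"
  unfolding pool_def using finite_M by simp

lemma best_pool:
  assumes "config c x"
  shows "best (pool c x) \<in> pool c x" "\<And>g. g \<in> pool c x \<Longrightarrow> \<rho> g \<le> \<rho> (best (pool c x))"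
proof -
  have ne: "pool c x \<noteq> {}" using card_pool[OF assms] by auto
  show "best (pool c x) \<in> pool c x" "\<And>g. g \<in> pool c x \<Longrightarrow> \<rho> g \<le> \<rho> (best (pool c x))"
    using arg_max_on_finite[OF finite_pool ne] by blast+
qed

lemma best_pool_favourite:
  assumes "config c x" "g \<in> pool c x"
  shows "v i {g} \<le> v i {best (pool c x)}"
  using best_pool[OF assms(1)] assms(2) rank_refines[of "best (pool c x)" g]
  by (force simp: pool_def not_le)

lemma card_rest:
  assumes "config c x"
  shows "card (rest c x) = 3"
  using card_pool[OF assms] best_pool(1)[OF assms] finite_pool unfolding rest_def by simp

lemma card_envious_less: "card (envious c x) < card N"
proof -
  have "envious c x \<subseteq> N - {i}" unfolding envious_def by auto
  then have "card (envious c x) \<le> card (N - {i})" using finite_N by (intro card_mono) auto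
  then show ?thesis using finite_N i_in_N two_agents by simp
qed

lemma exists_config: "\<exists>c x. config c x"
proof -
  have "card (N - {i}) \<noteq> 0" using finite_N i_in_N two_agents by simp
  then obtain c where c: "c \<in> N - {i}" by (metis card.empty ex_in_conv)
  have "card (N - {i, c}) \<le> card N" using finite_N by (intro card_mono) auto
  then have "card (N - {i, c}) \<le> card M" using card_M by simp
  then obtain y where "inj_on y (N - {i, c})" "y ` (N - {i, c}) \<subseteq> M"
    using card_le_inj[of "N - {i, c}" M] finite_N finite_M by auto
  then obtain x where "inj_on x (N - {i, c})" "x ` (N - {i, c}) \<subseteq> M"
      "\<forall>a\<in>N - {i, c}. \<forall>g\<in>M - x ` (N - {i, c}). v a {g} \<le> v a {x a}"
    using exists_locally_optimal_injection[of "N - {i, c}" M y "\<lambda>a g. v a {g}"] finite_N finite_M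
    by auto
  then show ?thesis using c unfolding config_def by blast
qed

lemma give_best_to_special:
  assumes "config c x"
  defines "y \<equiv> x(c := best (pool c x))"
  shows "inj_on y (N - {i})" "y ` (N - {i}) = M - rest c x"
proof -
  have c: "c \<in> N - {i}" and inj: "inj_on x (N - {i, c})" and x_M: "x ` (N - {i, c}) \<subseteq> M"
    using assms(1) unfolding config_def by auto
  have split: "N - {i} = insert c (N - {i, c})" using c by auto
  have y_x: "y ` (N - {i, c}) = x ` (N - {i, c})" unfolding y_def by (intro image_cong) auto
  have best: "best (pool c x) \<in> M" "best (pool c x) \<notin> x ` (N - {i, c})"
    using best_pool(1)[OF assms(1)] unfolding pool_def by auto
  have "inj_on y (N - {i, c})"
    using inj unfolding y_def by (rule inj_on_cong[THEN iffD1, rotated]) auto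
  then show "inj_on y (N - {i})"
    unfolding split using best(2) y_x by (simp add: y_def)
  show "y ` (N - {i}) = M - rest c x"
    unfolding split image_insert y_x using best x_M by (auto simp: y_def rest_def pool_def)
qed

lemma reassign_from_envious_agent:
  assumes cfg: "config c x" and b: "b \<in> N - {i, c}"
    and c_favourite: "\<forall>g\<in>pool c x. v c {g} \<le> v c {best (pool c x)}"
  shows "\<exists>x'. config b x' \<and> rest c x \<subseteq> pool b x' \<and> v c {best (pool c x)} \<le> v c {x' c} \<and>
              (\<forall>a\<in>N - {i, b, c}. v a {x a} \<le> v a {x' a})"
proof -
  define y where "y = x(c := best (pool c x))"
  have "inj_on y (N - {i, b})" "y ` (N - {i, b}) \<subseteq> M - rest c x"
    using give_best_to_special[OF cfg, folded y_def] by (auto intro: inj_on_subset)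
  then obtain x' where x': "inj_on x' (N - {i, b})" "x' ` (N - {i, b}) \<subseteq> M - rest c x"
      "\<forall>a\<in>N - {i, b}. v a {y a} \<le> v a {x' a}"
      "\<forall>a\<in>N - {i, b}. \<forall>g\<in>(M - rest c x) - x' ` (N - {i, b}). v a {g} \<le> v a {x' a}"
    using exists_locally_optimal_injection[of "N - {i, b}" "M - rest c x" y "\<lambda>a g. v a {g}"]
      finite_N finite_M
    by auto
  have c_remains: "c \<in> N - {i, b}" using b cfg unfolding config_def by auto
  have rest_below_y: "v a {g} \<le> v a {y a}" if "a \<in> N - {i, b}" "g \<in> rest c x" for a g
  proof (cases "a = c")
    case True
    then show ?thesis using c_favourite that(2) by (simp add: y_def rest_def)
  next
    case False
    then show ?thesis using cfg that unfolding config_def rest_def pool_def y_def by auto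
  qed
  have "config b x'"
    unfolding config_def
  proof (intro conjI ballI)
    show "b \<in> N - {i}" "inj_on x' (N - {i, b})" "x' ` (N - {i, b}) \<subseteq> M" using b x'(1,2) by auto
    fix a g assume a: "a \<in> N - {i, b}" and g: "g \<in> M - x' ` (N - {i, b})"
    show "v a {g} \<le> v a {x' a}"
    proof (cases "g \<in> rest c x")
      case True
      then show ?thesis using rest_below_y[OF a] x'(3) a by (meson order_trans)
    next
      case False
      then show ?thesis using x'(4) a g by blast
    qed
  qed
  moreover have "rest c x \<subseteq> pool b x'" using x'(2) unfolding pool_def rest_def by auto
  moreover have "v c {best (pool c x)} \<le> v c {x' c}"
    using x'(3) c_remains unfolding y_def by force
  moreover have "v a {x a} \<le> v a {x' a}" if "a \<in> N - {i, b, c}" for a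
  proof -
    have "a \<in> N - {i, b}" "a \<noteq> c" using that by auto
    then show ?thesis using bspec[OF x'(3), of a] unfolding y_def by simp
  qed
  ultimately show ?thesis by blast
qed

lemma minimal_config_envy_free:
  assumes cfg: "config c x" and minimal: "\<And>c' x'. config c' x' \<Longrightarrow> potential c x \<le> potential c' x'"
    and c_favourite: "\<forall>g\<in>pool c x. v c {g} \<le> v c {best (pool c x)}"
    and c_prefers_best: "\<forall>g\<in>rest c x. v c (rest c x - {g}) < v c {best (pool c x)}"
  shows "envious c x = {}"
proof (rule ccontr)
  assume "envious c x \<noteq> {}"
  then obtain b where b_envious: "b \<in> envious c x" by blast
  then have b: "b \<in> N - {i, c}" unfolding envious_def by auto
  define S where "S = rest c x"
  obtain x' where cfg': "config b x'" and S_pool: "S \<subseteq> pool b x'"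
    and c_gains: "v c {best (pool c x)} \<le> v c {x' c}"
    and others_gain: "\<forall>a\<in>N - {i, b, c}. v a {x a} \<le> v a {x' a}"
    using reassign_from_envious_agent[OF cfg b c_favourite] unfolding S_def by blast
  have finite_S: "finite S" using finite_pool finite_subset S_pool by blast
  have "card S < card (pool b x')" using card_rest[OF cfg] card_pool[OF cfg'] by (simp add: S_def)
  then have "\<not> pool b x' \<subseteq> S" using finite_S card_mono by (metis leD)
  then obtain z where z: "z \<in> pool b x'" "z \<notin> S" by blast
  have pool': "pool b x' = insert z S"
    using z S_pool finite_pool card_rest[OF cfg] card_pool[OF cfg'] finite_S
    by (intro card_subset_eq[symmetric]) (auto simp: S_def)
  have "inj_on \<rho> (insert z S)" using inj_rank pool' unfolding pool_def by (metis Diff_subset inj_on_subset)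
  then have "rest b x' = S \<or> (\<Sum>g\<in>rest b x'. \<rho> g) < (\<Sum>g\<in>S. \<rho> g)"
    using insert_Diff_arg_max_on[OF finite_S z(2)] unfolding rest_def pool' by blast
  then have "potential b x' < potential c x"
  proof
    assume rest': "rest b x' = S"
    have "envious b x' \<subseteq> envious c x - {b}"
    proof
      fix a assume "a \<in> envious b x'"
      then obtain g where a: "a \<in> N - {i, b}" and g: "g \<in> S" and envy: "v a {x' a} < v a (S - {g})"
        unfolding envious_def rest' by blast
      have "a \<noteq> c" using envy c_gains c_prefers_best g unfolding S_def by force
      then show "a \<in> envious c x - {b}"
        using a g envy others_gain unfolding envious_def S_def by force
    qed
    then have "card (envious b x') < card (envious c x)"
      using b_envious finite_N unfolding envious_def by (intro psubset_card_mono) auto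
    then show ?thesis unfolding potential_def rest' S_def by simp
  next
    assume "(\<Sum>g\<in>rest b x'. \<rho> g) < (\<Sum>g\<in>S. \<rho> g)"
    then have "(\<Sum>g\<in>rest b x'. \<rho> g) * card N + card N \<le> (\<Sum>g\<in>S. \<rho> g) * card N"
      by (metis Suc_leI mult_Suc mult_le_mono1 add.commute)
    then show ?thesis using card_envious_less[of b x'] unfolding potential_def S_def by linarith
  qed
  then show False using minimal[OF cfg'] by simp
qed

lemma favourable_if_pool_splits:
  assumes cfg: "config c x"
    and Q: "Qi \<union> Qc = pool c x" "Qi \<inter> Qc = {}" "card Qi = 2" "card Qc = 2"
      "best (pool c x) \<in> Qi"
    and c_envy_free: "\<forall>g\<in>Qi. v c {g} \<le> v c Qc"
  shows "\<exists>A. favourable_EFX_allocation N M v i A"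
proof -
  have c: "c \<in> N" "i \<noteq> c" and inj: "inj_on x (N - {i, c})" and x_M: "x ` (N - {i, c}) \<subseteq> M"
    and others: "\<forall>a\<in>N - {i, c}. \<forall>g\<in>Qi \<union> Qc. v a {g} \<le> v a {x a}"
    using cfg Q(1) unfolding config_def pool_def by auto
  have i_favourite: "\<forall>g\<in>Qi \<union> Qc. v i {g} \<le> v i {best (pool c x)}"
    using best_pool_favourite[OF cfg] Q(1) by blast
  have "v i {best (pool c x)} \<le> v i Qi"
    using monotone i_in_N Q(1,5) unfolding pool_def by (intro monotone_valuationD[of M]) auto
  then have i_envy_free: "\<forall>g\<in>Qc. v i {g} \<le> v i Qi" using i_favourite by force
  have "\<exists>g\<in>Qi. \<forall>g'\<in>Qi \<union> Qc. v i {g'} \<le> v i {g}" using i_favourite Q(5) by blast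
  moreover have "Qi \<union> Qc = M - x ` (N - {i, c})" using Q(1) unfolding pool_def .
  ultimately show ?thesis
    using favourable_EFX_allocation_pairs[OF monotone i_in_N c inj x_M _ Q(2-4) others
        i_envy_free c_envy_free]
    by blast
qed

lemma favourable_if_envy_free:
  assumes cfg: "config c x" and no_envious: "envious c x = {}"
    and c_prefers_best: "\<forall>g\<in>rest c x. v c (rest c x - {g}) \<le> v c {best (pool c x)}"
  shows "\<exists>A. favourable_EFX_allocation N M v i A"
proof -
  define y where "y = x(c := best (pool c x))"
  have y_inj: "inj_on y (N - {i})" using give_best_to_special(1)[OF cfg] unfolding y_def .
  have y_image: "y ` (N - {i}) = M - rest c x"
    using give_best_to_special(2)[OF cfg] unfolding y_def .
  have "rest c x \<subseteq> M" unfolding rest_def pool_def by blast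
  then have y_M: "y ` (N - {i}) \<subseteq> M" and rest_eq: "rest c x = M - y ` (N - {i})"
    using y_image by auto
  have no_envy: "\<forall>a\<in>N - {i}. \<forall>g\<in>rest c x. v a (rest c x - {g}) \<le> v a {y a}"
  proof (intro ballI)
    fix a g assume a: "a \<in> N - {i}" and g: "g \<in> rest c x"
    show "v a (rest c x - {g}) \<le> v a {y a}"
    proof (cases "a = c")
      case True
      then show ?thesis using c_prefers_best g unfolding y_def by simp
    next
      case False
      then have "a \<in> N - {i, c}" "a \<notin> envious c x" using no_envious a by auto
      then have "\<not> v a {x a} < v a (rest c x - {g})" using g unfolding envious_def by blast
      then show ?thesis using False unfolding y_def by simp
    qed
  qed
  show ?thesis
    using favourable_EFX_allocation_triple[OF monotone i_in_N y_inj y_M rest_eq card_rest[OF cfg] no_envy]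
    by blast
qed

lemma minimal_config_favourable:
  assumes cfg: "config c x" and minimal: "\<And>c' x'. config c' x' \<Longrightarrow> potential c x \<le> potential c' x'"
  shows "\<exists>A. favourable_EFX_allocation N M v i A"
proof -
  define P where "P = pool c x"
  define r where "r = best P"
  define S where "S = rest c x"
  have P: "card P = 4" "finite P" "P \<subseteq> M" "r \<in> P" "S = P - {r}"
    using card_pool[OF cfg] finite_pool best_pool(1)[OF cfg]
    unfolding P_def r_def S_def rest_def pool_def by auto
  have c: "c \<in> N" using cfg unfolding config_def by blast
  have mono_c: "v c {h} \<le> v c Q" if "h \<in> Q" "Q \<subseteq> P" for h Q
    using monotone c that P(3) by (intro monotone_valuationD[of M]) auto
  have split: "\<exists>A. favourable_EFX_allocation N M v i A"
    if "Qi \<union> Qc = P" "Qi \<inter> Qc = {}" "card Qi = 2" "card Qc = 2" "r \<in> Qi"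
      "\<forall>g\<in>Qi. v c {g} \<le> v c Qc" for Qi Qc
    using favourable_if_pool_splits[OF cfg] that unfolding P_def r_def by blast
  obtain m where m: "m \<in> P" "\<forall>g\<in>P. v c {g} \<le> v c {m}"
    using arg_max_on_finite[where S = P and f = "\<lambda>g. v c {g}"] P(1,2) by fastforce
  show ?thesis
  proof (cases "m = r")
    case False
    have "card (P - {r, m}) = 2" using P m(1) False by (simp add: card_Diff_subset)
    then have "P - {r, m} \<noteq> {}" by (metis card.empty zero_neq_numeral)
    then obtain y where y: "y \<in> P" "y \<noteq> r" "y \<noteq> m" by blast
    have "v c {m} \<le> v c (P - {r, y})" using m(1) y(3) False by (intro mono_c) auto
    then have "\<forall>g\<in>{r, y}. v c {g} \<le> v c (P - {r, y})" using m(2) y(1) P(4) order_trans by blast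
    moreover have "card (P - {r, y}) = 2" using P y by (simp add: card_Diff_subset)
    ultimately show ?thesis using y P(4) by (intro split[of "{r, y}" "P - {r, y}"]) auto
  next
    case True
    then have c_favourite: "\<forall>g\<in>P. v c {g} \<le> v c {r}" using m(2) by simp
    show ?thesis
    proof (cases "\<exists>g\<in>S. v c {r} \<le> v c (S - {g})")
      case True
      then obtain g where g: "g \<in> S" "v c {r} \<le> v c (S - {g})" by blast
      have "\<forall>h\<in>{r, g}. v c {h} \<le> v c (S - {g})" using c_favourite g P(4,5) by force
      moreover have "card (S - {g}) = 2" using P g(1) by simp
      ultimately show ?thesis using g(1) P(4,5) by (intro split[of "{r, g}" "S - {g}"]) auto
    next
      case False
      then have c_prefers_best: "\<forall>g\<in>S. v c (S - {g}) < v c {r}" by (simp add: not_le)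
      then have "envious c x = {}"
        using minimal_config_envy_free[OF cfg minimal] c_favourite unfolding P_def r_def S_def
        by blast
      then show ?thesis
        using favourable_if_envy_free[OF cfg] c_prefers_best
        unfolding P_def r_def S_def by (simp add: less_imp_le)
    qed
  qed
qed

lemma favourable_allocation_exists: "\<exists>A. favourable_EFX_allocation N M v i A"
proof -
  obtain c x where "config c x" using exists_config by blast
  then obtain p where p: "config (fst p) (snd p)"
    and p_minimal: "\<forall>q. config (fst q) (snd q) \<longrightarrow> potential (fst p) (snd p) \<le> potential (fst q) (snd q)"
    using ex_has_least_nat[of "\<lambda>p. config (fst p) (snd p)" "(c, x)" "\<lambda>p. potential (fst p) (snd p)"]
    by auto
  show ?thesis
  proof (rule minimal_config_favourable[OF p])
    show "potential (fst p) (snd p) \<le> potential c' x'" if "config c' x'" for c' x'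
      using p_minimal that by (metis fst_conv snd_conv)
  qed
qed

end

theorem lemma7:
  fixes N :: "'a set" and M :: "'g set" and v :: "'a \<Rightarrow> 'g set \<Rightarrow> real" and i :: 'a
  assumes "finite N" and "finite M"
    and "card M = card N + 2"
    and "\<forall>k\<in>N. monotone_valuation M (v k)"
    and "i \<in> N"
  shows "\<exists>A. is_allocation N M A \<and> EFX N v A \<and> (\<forall>k\<in>N. A k \<noteq> {}) \<and>
           (card (A i) = 3 \<or>
            (\<exists>j\<in>N. j \<noteq> i \<and> card (A i) = 2 \<and> card (A j) = 2 \<and>
               (\<exists>k\<in>{i, j}. \<exists>g\<in>A k. \<forall>g'\<in>A i \<union> A j. v k {g} \<ge> v k {g'})))"
proof -
  have "\<exists>A. favourable_EFX_allocation N M v i A"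
  proof (cases "2 \<le> card N")
    case True
    obtain \<rho> :: "'g \<Rightarrow> nat" where "inj_on \<rho> M" "\<forall>g\<in>M. \<forall>h\<in>M. v i {g} < v i {h} \<longrightarrow> \<rho> g < \<rho> h"
      using exists_rank_refining[OF assms(2), of "\<lambda>g. v i {g}"] by blast
    then interpret ranked_instance N M v i \<rho>
      using assms True by unfold_locales auto
    show ?thesis by (rule favourable_allocation_exists)
  next
    case False
    then have "card N \<le> Suc 0" by simp
    then have N: "N = {i}" using card_le_Suc0_iff_eq[OF assms(1)] assms(5) by blast
    have "favourable_EFX_allocation {i} M v i ((\<lambda>a. {undefined a})(i := M))"
      using assms(3,4) unfolding N by (intro favourable_EFX_allocation_triple) auto
    then show ?thesis unfolding N by blast
  qed
  then show ?thesis unfolding favourable_EFX_allocation_def .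
qed

end
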